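(* Let $d\le 4$ and let $A=(A_1,\dots,A_d)$ have a palindromic Ising model distribution on $\{0,1\}^d$. Then for every nonempty subset $M\subseteq\{1,\dots,d\}$, the marginal distribution of $(A_v)_{v\in M}$ is again a palindromic Ising model.
   Context: A distribution $p$ on $\{0,1\}^k$ with $p(a)>0$ for all $a$ is palindromic if $p(a)=p(\sim a)$ for all $a$, where $\sim a$ is the complement of $a$. Its log-linear interactions (effect coding) are $\lambda_b=2^{-k}\sum_{a}(-1)^{a\cdot b}\log p(a)$ for $b\in\{0,1\}^k$. It is an Ising model if $\lambda_b=0$ for all $b$ with $|b|=\sum_v b_v\ge3$, and a palindromic Ising model if it is both an Ising model and palindromic (equivalently an Ising model with uniform margins). *)

theory Defs
  imports Complex_Main
begin

text \<open>A binary vector a in {0,1}^V (V a finite index set) is encoded by the set of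
  coordinates equal to 1, i.e. a subset of V. The complement of a is V - a and
  the dot product a.b is card (a \<inter> b).\<close>

definition pos_dist :: "nat set \<Rightarrow> (nat set \<Rightarrow> real) \<Rightarrow> bool" where
  "pos_dist V p \<longleftrightarrow> (\<forall>a\<subseteq>V. p a > 0) \<and> (\<Sum>a\<in>Pow V. p a) = 1"

definition palindromic :: "nat set \<Rightarrow> (nat set \<Rightarrow> real) \<Rightarrow> bool" where
  "palindromic V p \<longleftrightarrow> pos_dist V p \<and> (\<forall>a\<subseteq>V. p a = p (V - a))"

definition interaction :: "nat set \<Rightarrow> (nat set \<Rightarrow> real) \<Rightarrow> nat set \<Rightarrow> real" where
  "interaction V p b = (1 / 2 ^ card V) * (\<Sum>a\<in>Pow V. (-1) ^ card (a \<inter> b) * ln (p a))"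

definition ising :: "nat set \<Rightarrow> (nat set \<Rightarrow> real) \<Rightarrow> bool" where
  "ising V p \<longleftrightarrow> pos_dist V p \<and> (\<forall>b\<subseteq>V. card b \<ge> 3 \<longrightarrow> interaction V p b = 0)"

definition palindromic_ising :: "nat set \<Rightarrow> (nat set \<Rightarrow> real) \<Rightarrow> bool" where
  "palindromic_ising V p \<longleftrightarrow> ising V p \<and> palindromic V p"

definition marginal :: "nat set \<Rightarrow> nat set \<Rightarrow> (nat set \<Rightarrow> real) \<Rightarrow> nat set \<Rightarrow> real" where
  "marginal V M p c = (\<Sum>a\<in>{a\<in>Pow V. a \<inter> M = c}. p a)"

end

theory Submission
  imports Defs
begin

text \<open>Marginalisation commutes with complementation, so marginals of a palindromic
  distribution are palindromic. Complementation flips the sign of the character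
  (-1)^card (a \<inter> b) whenever card b is odd, so every odd-order interaction of a
  palindromic distribution vanishes. For d \<le> 4 the only remaining interactions of
  order \<ge> 3 have order 4 = d, which forces the marginal to be the full distribution,
  whose interactions of order \<ge> 3 vanish by assumption.\<close>

lemma palindromic_pos_dist: "palindromic V p \<Longrightarrow> pos_dist V p"
  unfolding palindromic_def by (rule conjunct1)

(* The symmetry as stated in palindromic_def loops the simplifier; this oriented
   form is safe as a rewrite rule. *)
lemma palindromic_compl: "palindromic V p \<Longrightarrow> a \<subseteq> V \<Longrightarrow> p (V - a) = p a"
  unfolding palindromic_def by (metis (no_types))

lemma pos_dist_marginal:
  assumes "pos_dist V p" "finite V" "M \<subseteq> V"
  shows "pos_dist M (marginal V M p)"
  unfolding pos_dist_def
proof (intro conjI allI impI)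
  fix c assume c: "c \<subseteq> M"
  have fiber: "c \<in> {a\<in>Pow V. a \<inter> M = c}" using c assms(3) by auto
  have "0 < p c" using assms(1,3) c unfolding pos_dist_def by auto
  also have "p c \<le> (\<Sum>a\<in>{a\<in>Pow V. a \<inter> M = c}. p a)"
    using assms(1,2) fiber
    by (intro member_le_sum) (auto simp: pos_dist_def intro: less_imp_le)
  finally show "0 < marginal V M p c" unfolding marginal_def .
next
  have "(\<Sum>c\<in>Pow M. marginal V M p c) = (\<Sum>a\<in>Pow V. p a)"
    unfolding marginal_def using assms(2,3) finite_subset
    by (intro sum.group) auto
  then show "(\<Sum>c\<in>Pow M. marginal V M p c) = 1"
    using assms(1) unfolding pos_dist_def by simp
qed

lemma palindromic_marginal:
  assumes "palindromic V p" "finite V" "M \<subseteq> V"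
  shows "palindromic M (marginal V M p)"
  unfolding palindromic_def
proof (intro conjI allI impI)
  show "pos_dist M (marginal V M p)"
    using assms pos_dist_marginal palindromic_pos_dist by blast
  note flip = palindromic_compl[OF assms(1)]
  have fiber_compl: "(V - a) \<inter> M = M - (a \<inter> M)" for a
    using assms(3) by blast
  fix c assume c: "c \<subseteq> M"
  show "marginal V M p c = marginal V M p (M - c)"
    unfolding marginal_def
  proof (rule sum.reindex_bij_witness[where i="\<lambda>a. V - a" and j="\<lambda>a. V - a"])
    fix a assume "a \<in> {a \<in> Pow V. a \<inter> M = c}"
    then show "V - (V - a) = a" "V - a \<in> {a \<in> Pow V. a \<inter> M = M - c}" "p (V - a) = p a"
      by (auto simp: fiber_compl flip double_diff)
  next
    fix a assume a: "a \<in> {a \<in> Pow V. a \<inter> M = M - c}"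
    then show "V - (V - a) = a" by (auto simp: double_diff)
    have "M - (M - c) = c" using c by blast
    with a show "V - a \<in> {a \<in> Pow V. a \<inter> M = c}" by (simp add: fiber_compl)
  qed
qed

lemma character_complement_odd:
  assumes "finite b" "b \<subseteq> W" "a \<subseteq> W" "odd (card b)"
  shows "(-1::real) ^ card ((W - a) \<inter> b) = - ((-1) ^ card (a \<inter> b))"
proof -
  have "(W - a) \<inter> b = b - a \<inter> b" using assms(2) by auto
  then have "card ((W - a) \<inter> b) + card (a \<inter> b) = card b"
    using assms(1) by (simp add: card_Diff_subset card_mono)
  then have "odd (card ((W - a) \<inter> b)) \<longleftrightarrow> even (card (a \<inter> b))"
    using assms(4) by presburger
  then show ?thesis by (cases "even (card (a \<inter> b))") simp_all
qed

lemma interaction_odd_eq_0: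
  assumes "palindromic W q" "finite W" "b \<subseteq> W" "odd (card b)"
  shows "interaction W q b = 0"
proof -
  let ?S = "\<Sum>a\<in>Pow W. (-1) ^ card (a \<inter> b) * ln (q a) :: real"
  note flip = palindromic_compl[OF assms(1)]
  have "?S = (\<Sum>a\<in>Pow W. (-1) ^ card ((W - a) \<inter> b) * ln (q (W - a)))"
    by (rule sum.reindex_bij_witness[where i="\<lambda>a. W - a" and j="\<lambda>a. W - a"])
       (auto simp: double_diff)
  also have "\<dots> = (\<Sum>a\<in>Pow W. - ((-1) ^ card (a \<inter> b) * ln (q a)))"
    using character_complement_odd[OF finite_subset[OF assms(3,2)] assms(3) _ assms(4)]
    by (intro sum.cong) (auto simp: flip)
  also have "\<dots> = - ?S" by (simp add: sum_negf)
  finally show ?thesis unfolding interaction_def by simp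
qed

lemma marginal_full:
  assumes "a \<subseteq> V"
  shows "marginal V V p a = p a"
proof -
  have "{a'\<in>Pow V. a' \<inter> V = a} = {a}" using assms by blast
  then show ?thesis unfolding marginal_def by simp
qed

lemma interaction_marginal_full:
  "interaction V (marginal V V p) b = interaction V p b"
  unfolding interaction_def by (simp add: marginal_full)

theorem proposition5p2:
  fixes d :: nat and p :: "nat set \<Rightarrow> real" and M :: "nat set"
  assumes "d \<le> 4"
    and "palindromic_ising {1..d} p"
    and "M \<subseteq> {1..d}" and "M \<noteq> {}"
  shows "palindromic_ising M (marginal {1..d} M p)"
proof -
  let ?V = "{1..d}"
  have pal: "palindromic M (marginal ?V M p)"
    using assms(2,3) palindromic_marginal unfolding palindromic_ising_def by blast
  have "interaction M (marginal ?V M p) b = 0" if b: "b \<subseteq> M" "3 \<le> card b" for b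
  proof (cases "odd (card b)")
    case True
    then show ?thesis
      using interaction_odd_eq_0[OF pal _ b(1)] assms(3) finite_subset by blast
  next
    case False
    have "card b \<le> card ?V" using b(1) assms(3) by (intro card_mono) auto
    with False b(2) assms(1) have "card b = card ?V" by simp presburger
    then have "b = ?V" "M = ?V"
      using b(1) assms(3) card_subset_eq[of ?V b] by auto
    then show ?thesis
      using assms(2) b(2) interaction_marginal_full
      unfolding palindromic_ising_def ising_def by auto
  qed
  then show ?thesis
    using pal palindromic_pos_dist unfolding palindromic_ising_def ising_def by blast
qed

end
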